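(* Let $\lambda>0$ with $\lambda\neq 1$ and $\mu=1/\lambda$, and let $A\in M_3\otimes M_3$ be the $9\times 9$ matrix $$A=\left(\begin{array}{ccc|ccc|ccc} 1&0&0&0&1&0&0&0&1\\ 0&\lambda^2&0&1&0&0&0&0&0\\ 0&0&\mu^2&0&0&0&1&0&0\\ \hline 0&1&0&\mu^2&0&0&0&0&0\\ 1&0&0&0&1&0&0&0&1\\ 0&0&0&0&0&\lambda^2&0&1&0\\ \hline 0&0&1&0&0&0&\lambda^2&0&0\\ 0&0&0&0&0&1&0&\mu^2&0\\ 1&0&0&0&1&0&0&0&1 \end{array}\right).$$ Then $A\in\mathbb{V}_2\setminus\mathbb{V}_1$; that is, $A$ has Schmidt number two.
   Context: Identify $M_3\otimes M_3$ with $3\times 3$ block matrices with $3\times 3$ blocks. For $z\in M_3$ with rows $z_1,z_2,z_3\in\mathbb C^3$ (as column vectors), $\tilde z\tilde z^*$ denotes the block matrix whose $(i,j)$ block is $z_iz_j^*$. For $s=1,2,3$, $\mathbb{V}_s$ is the convex cone generated by $\{\tilde z\tilde z^*:\operatorname{rank} z\le s\}$. The Schmidt number of a positive semi-definite $A$ is the least $s$ with $A\in\mathbb{V}_s$. *)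

theory Defs
  imports "Jordan_Normal_Form.DL_Rank"
begin

text \<open>Elements of M_3 are complex 3x3 matrices (z in carrier_mat 3 3); M_3 (x) M_3 is
  identified with 9x9 complex matrices, row/column index 3*i+a standing for block i,
  in-block index a (indices from 0).\<close>

definition ztilde :: "complex mat \<Rightarrow> complex vec" where
  "ztilde z = vec 9 (\<lambda>k. z $$ (k div 3, k mod 3))"

definition ztilde_proj :: "complex mat \<Rightarrow> complex mat" where
  "ztilde_proj z = mat 9 9 (\<lambda>(r, c). (ztilde z $ r) * cnj (ztilde z $ c))"

text \<open>V_s: the convex cone generated by {z~ z~^* : rank z \<le> s}, i.e. all finite
  nonnegative combinations of such matrices.\<close>
definition VV :: "nat \<Rightarrow> complex mat set" where
  "VV s = {A. \<exists>(n::nat) (c::nat \<Rightarrow> real) (zs::nat \<Rightarrow> complex mat).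
      (\<forall>i<n. c i \<ge> 0 \<and> zs i \<in> carrier_mat 3 3 \<and> vec_space.rank 3 (zs i) \<le> s) \<and>
      A = mat 9 9 (\<lambda>(r, k). \<Sum>i<n. complex_of_real (c i) * (ztilde_proj (zs i) $$ (r, k)))}"

definition A_mat :: "real \<Rightarrow> complex mat" where
  "A_mat lam = (let l = complex_of_real (lam^2); m = complex_of_real ((1/lam)^2) in
    mat_of_rows_list 9
     [[1,0,0, 0,1,0, 0,0,1],
      [0,l,0, 1,0,0, 0,0,0],
      [0,0,m, 0,0,0, 1,0,0],
      [0,1,0, m,0,0, 0,0,0],
      [1,0,0, 0,1,0, 0,0,1],
      [0,0,0, 0,0,l, 0,1,0],
      [0,0,1, 0,0,0, l,0,0],
      [0,0,0, 0,0,1, 0,m,0],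
      [1,0,0, 0,1,0, 0,0,1]])"

end

theory Submission
  imports Defs "Jordan_Normal_Form.DL_Rank_Submatrix"
begin

(* A lies in V_2 because it is the explicit combination
   1/2 z1~ z1~^* + 1/2 z2~ z2~^* + z3~ z3~^* + z4~ z4~^* of four singular 3x3 matrices z_i.
   It does not lie in V_1: if A = sum c_i z_i~ z_i~^* with c_i > 0, then every vector isotropic
   for A is orthogonal to each z_i~.  The isotropic vectors e0 - e4, e4 - e8, e1 - t e3, e6 - t e2
   and e5 - t e7 (t = lambda^2, index 3*row + column) force each z_i to have constant diagonal a
   and z01 = t z10, z20 = t z02, z12 = t z21.  If z_i has rank one, its 2x2 minors vanish, giving
   a z02 = t^3 a z02 and a^2 = t z02^2; since t^3 <> 1 this yields a = 0.  Hence
   A00 = sum c_i |a_i|^2 = 0, whereas A00 = 1. *)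

lemma det_dim_1:
  fixes A :: "'a::comm_ring_1 mat"
  assumes "A \<in> carrier_mat 1 1"
  shows "det A = A $$ (0,0)"
  using laplace_expansion_column[OF assms, of 0] assms
  by (simp add: cofactor_def mat_delete_def)

lemma det_dim_2:
  fixes A :: "'a::comm_ring_1 mat"
  assumes "A \<in> carrier_mat 2 2"
  shows "det A = A $$ (0,0) * A $$ (1,1) - A $$ (0,1) * A $$ (1,0)"
proof -
  have "det A = (\<Sum>i<2. A $$ (i,0) * cofactor A i 0)"
    using laplace_expansion_column[OF assms, of 0] by simp
  also have "\<dots> = A $$ (0,0) * A $$ (1,1) - A $$ (0,1) * A $$ (1,0)"
    using assms by (simp add: numeral_2_eq_2 cofactor_def det_dim_1 mat_delete_def)
  finally show ?thesis .
qed

lemma det_dim_3: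
  fixes A :: "'a::comm_ring_1 mat"
  assumes "A \<in> carrier_mat 3 3"
  shows "det A = A $$ (0,0) * (A $$ (1,1) * A $$ (2,2) - A $$ (1,2) * A $$ (2,1))
     - A $$ (1,0) * (A $$ (0,1) * A $$ (2,2) - A $$ (0,2) * A $$ (2,1))
     + A $$ (2,0) * (A $$ (0,1) * A $$ (1,2) - A $$ (0,2) * A $$ (1,1))"
proof -
  have "det A = (\<Sum>i<3. A $$ (i,0) * cofactor A i 0)"
    using laplace_expansion_column[OF assms, of 0] by simp
  also have "\<dots> = A $$ (0,0) * cofactor A 0 0 + A $$ (1,0) * cofactor A 1 0 + A $$ (2,0) * cofactor A 2 0"
    by (simp add: eval_nat_numeral)
  also have "cofactor A 0 0 = A $$ (1,1) * A $$ (2,2) - A $$ (1,2) * A $$ (2,1)"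
    using assms by (simp add: cofactor_def mat_delete_def eval_nat_numeral det_dim_2)
  also have "cofactor A 1 0 = - (A $$ (0,1) * A $$ (2,2) - A $$ (0,2) * A $$ (2,1))"
    using assms by (simp add: cofactor_def mat_delete_def eval_nat_numeral det_dim_2)
  also have "cofactor A 2 0 = A $$ (0,1) * A $$ (1,2) - A $$ (0,2) * A $$ (1,1)"
    using assms by (simp add: cofactor_def mat_delete_def eval_nat_numeral det_dim_2)
  finally show ?thesis by (simp add: algebra_simps)
qed

lemma rank_le_1_minor_eq:
  fixes A :: "'a::field mat"
  assumes A: "A \<in> carrier_mat n nc" and rank: "vec_space.rank n A \<le> 1"
    and i: "i < i'" "i' < n" and j: "j < j'" "j' < nc"
  shows "A $$ (i,j) * A $$ (i',j') = A $$ (i,j') * A $$ (i',j)"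
proof -
  let ?B = "submatrix A {i,i'} {j,j'}"
  have rows: "{r. r < dim_row A \<and> r \<in> {i,i'}} = {i,i'}"
    using A i by auto
  have cols: "{c. c < dim_col A \<and> c \<in> {j,j'}} = {j,j'}"
    using A j by auto
  have "dim_row ?B = 2" "dim_col ?B = 2"
    unfolding dim_submatrix rows cols using i j by simp_all
  then have B: "?B \<in> carrier_mat 2 2" by blast
  have "det ?B = 0"
  proof (rule ccontr)
    assume "det ?B \<noteq> 0"
    then have "card {c. c < nc \<and> c \<in> {j,j'}} \<le> vec_space.rank n A"
      by (rule vec_space.rank_gt_minor[OF A])
    with cols A j rank show False by simp
  qed
  have entry: "?B $$ (card {a\<in>{i,i'}. a < r}, card {a\<in>{j,j'}. a < c}) = A $$ (r,c)"
    if "r \<in> {i,i'}" "c \<in> {j,j'}" for r c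
    by (rule submatrix_index_card) (use that A i j in auto)
  have below: "{a\<in>{i,i'}. a < i} = {}" "{a\<in>{i,i'}. a < i'} = {i}"
    "{a\<in>{j,j'}. a < j} = {}" "{a\<in>{j,j'}. a < j'} = {j}"
    using i j by auto
  have "?B $$ (0,0) = A $$ (i,j)" "?B $$ (0,1) = A $$ (i,j')"
    "?B $$ (1,0) = A $$ (i',j)" "?B $$ (1,1) = A $$ (i',j')"
    using entry[of i j, unfolded below] entry[of i j', unfolded below]
      entry[of i' j, unfolded below] entry[of i' j', unfolded below] by simp_all
  with \<open>det ?B = 0\<close> show ?thesis
    unfolding det_dim_2[OF B] by (simp add: algebra_simps)
qed

lemma ztilde_proj_index:
  "r < 9 \<Longrightarrow> k < 9 \<Longrightarrow> ztilde_proj z $$ (r,k) = ztilde z $ r * cnj (ztilde z $ k)"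
  by (simp add: ztilde_proj_def)

definition mat_of_stacked :: "(nat \<Rightarrow> complex) \<Rightarrow> complex mat" where
  "mat_of_stacked v = mat 3 3 (\<lambda>(a,b). v (3 * a + b))"

lemma mat_of_stacked_carrier: "mat_of_stacked v \<in> carrier_mat 3 3"
  by (simp add: mat_of_stacked_def)

lemma ztilde_mat_of_stacked: "r < 9 \<Longrightarrow> ztilde (mat_of_stacked v) $ r = v r"
  by (simp add: ztilde_def mat_of_stacked_def)

definition A_entries :: "real \<Rightarrow> real list list" where
  "A_entries lam = (let l = lam^2; m = (1/lam)^2 in
     [[1,0,0, 0,1,0, 0,0,1],
      [0,l,0, 1,0,0, 0,0,0],
      [0,0,m, 0,0,0, 1,0,0],
      [0,1,0, m,0,0, 0,0,0],
      [1,0,0, 0,1,0, 0,0,1],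
      [0,0,0, 0,0,l, 0,1,0],
      [0,0,1, 0,0,0, l,0,0],
      [0,0,0, 0,0,1, 0,m,0],
      [1,0,0, 0,1,0, 0,0,1]])"

lemma A_mat_index: "r < 9 \<Longrightarrow> k < 9 \<Longrightarrow> A_mat lam $$ (r,k) = of_real (A_entries lam ! r ! k)"
proof -
  assume "r < 9" "k < 9"
  moreover have "length (A_entries lam ! r) = 9" if "r < 9" for r
    using that by (auto simp: A_entries_def Let_def less_Suc_eq numeral_eq_Suc)
  moreover have "A_mat lam = mat_of_rows_list 9 (map (map complex_of_real) (A_entries lam))"
    by (simp add: A_mat_def A_entries_def Let_def)
  moreover have "length (A_entries lam) = 9" by (simp add: A_entries_def Let_def)
  ultimately show ?thesis by (simp add: mat_of_rows_list_def)
qed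

lemma less_9_cases: "(r::nat) < 9 \<longleftrightarrow> r \<in> {0,1,2,3,4,5,6,7,8}"
  by auto

definition V2_vectors :: "real \<Rightarrow> real list list" where
  "V2_vectors lam =
     [[1, lam,0,  1/lam,1,0, 0,0,1],
      [1,-lam,0, -1/lam,1,0, 0,0,1],
      [0,0,1/lam, 0,0,0, lam,0,0],
      [0,0,0, 0,0,lam, 0,1/lam,0]]"

definition V2_weights :: "real list" where
  "V2_weights = [1/2, 1/2, 1, 1]"

lemma A_entries_decomposition:
  assumes "lam \<noteq> 0" "r < 9" "k < 9"
  shows "A_entries lam ! r ! k = (\<Sum>i<4. V2_weights ! i * (V2_vectors lam ! i ! r * V2_vectors lam ! i ! k))"
  using assms(2,3) unfolding less_9_cases
  by (auto simp: A_entries_def V2_vectors_def V2_weights_def Let_def assms(1) power2_eq_square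
      numeral_eq_Suc lessThan_Suc)

lemma A_mat_in_VV2:
  assumes "lam \<noteq> 0"
  shows "A_mat lam \<in> VV 2"
proof -
  define zs where "zs i = mat_of_stacked (\<lambda>r. of_real (V2_vectors lam ! i ! r))" for i
  have carrier: "zs i \<in> carrier_mat 3 3" for i
    by (simp add: zs_def mat_of_stacked_carrier)
  have rank: "vec_space.rank 3 (zs i) \<le> 2" if "i < 4" for i
  proof -
    from that have "i \<in> {0,1,2,3}" by auto
    then have "det (zs i) = 0"
      using assms by (auto simp: det_dim_3 zs_def mat_of_stacked_def V2_vectors_def)
    then have "vec_space.rank 3 (zs i) < 3"
      unfolding zs_def by (rule vec_space.det_zero_low_rank[OF mat_of_stacked_carrier])
    then show ?thesis by simp
  qed
  have "A_mat lam = mat 9 9 (\<lambda>(r,k). \<Sum>i<4. of_real (V2_weights ! i) * ztilde_proj (zs i) $$ (r,k))"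
    (is "_ = ?S")
  proof (rule eq_matI)
    fix r k assume "r < dim_row ?S" "k < dim_col ?S"
    then have "r < 9" "k < 9" by auto
    then show "A_mat lam $$ (r,k) = ?S $$ (r,k)"
      by (simp add: A_mat_index A_entries_decomposition[OF assms] ztilde_proj_index
          ztilde_mat_of_stacked zs_def)
  qed (simp_all add: A_mat_def mat_of_rows_list_def Let_def)
  moreover have "0 \<le> V2_weights ! i" if "i < 4" for i
    using that by (auto simp: V2_weights_def less_Suc_eq numeral_eq_Suc)
  ultimately show ?thesis
    unfolding VV_def mem_Collect_eq
    by (intro exI[where x=4] exI[where x="(!) V2_weights"] exI[where x=zs] conjI)
      (auto simp: rank carrier)
qed

lemma cone_sum_form_zero_imp_ztilde_eq:
  fixes c :: "nat \<Rightarrow> real" and zs :: "nat \<Rightarrow> complex mat" and t :: real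
  assumes c: "\<forall>i<n. 0 \<le> c i"
    and M: "M = mat 9 9 (\<lambda>(r,k). \<Sum>i<n. complex_of_real (c i) * ztilde_proj (zs i) $$ (r,k))"
    and pq: "p < 9" "q < 9"
    and form: "M $$ (p,p) - of_real t * (M $$ (p,q) + M $$ (q,p)) + of_real (t^2) * M $$ (q,q) = 0"
    and i: "i < n" "c i \<noteq> 0"
  shows "ztilde (zs i) $ p = of_real t * ztilde (zs i) $ q"
proof -
  define x where "x j r = ztilde (zs j) $ r" for j r
  define w where "w j = x j p - of_real t * x j q" for j
  define S where "S r k = (\<Sum>j<n. of_real (c j) * (x j r * cnj (x j k)))" for r k
  have "M $$ (r,k) = S r k" if "r < 9" "k < 9" for r k
    using that by (simp add: M S_def x_def ztilde_proj_index)
  then have form_S: "S p p - of_real t * (S p q + S q p) + of_real (t^2) * S q q = 0"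
    using form pq by simp
  have "of_real (c j) * (w j * cnj (w j)) = of_real (c j) * (x j p * cnj (x j p))
      - of_real t * (of_real (c j) * (x j p * cnj (x j q)) + of_real (c j) * (x j q * cnj (x j p)))
      + of_real (t^2) * (of_real (c j) * (x j q * cnj (x j q)))" for j
    by (simp add: w_def algebra_simps power2_eq_square)
  then have "(\<Sum>j<n. of_real (c j) * (w j * cnj (w j))) = S p p - of_real t * (S p q + S q p) + of_real (t^2) * S q q"
    by (simp add: S_def sum.distrib sum_subtractf sum_distrib_left distrib_left)
  also have "\<dots> = 0" by (rule form_S)
  finally have "complex_of_real (\<Sum>j<n. c j * (cmod (w j))^2) = 0"
    by (simp only: of_real_sum of_real_mult complex_norm_square)
  then have "(\<Sum>j<n. c j * (cmod (w j))^2) = 0"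
    by (simp only: of_real_eq_0_iff)
  then have "c i * (cmod (w i))^2 = 0"
    using sum_nonneg_0[of "{..<n}" "\<lambda>j. c j * (cmod (w j))^2" i] c i(1) by simp
  then show ?thesis
    using i(2) by (simp add: w_def x_def)
qed

lemma rank_le_1_twisted_diagonal_eq_0:
  fixes z :: "complex mat" and t :: complex
  assumes z: "z \<in> carrier_mat 3 3" and rank: "vec_space.rank 3 z \<le> 1" and t: "t^3 \<noteq> 1"
    and diag: "z $$ (1,1) = z $$ (0,0)" "z $$ (2,2) = z $$ (0,0)"
    and off: "z $$ (0,1) = t * z $$ (1,0)" "z $$ (2,0) = t * z $$ (0,2)" "z $$ (1,2) = t * z $$ (2,1)"
  shows "z $$ (0,0) = 0"
proof -
  note minor = rank_le_1_minor_eq[OF z rank]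
  have m1: "z $$ (0,1) * z $$ (1,2) = z $$ (0,2) * z $$ (1,1)" by (rule minor) auto
  have m2: "z $$ (1,0) * z $$ (2,1) = z $$ (1,1) * z $$ (2,0)" by (rule minor) auto
  have m3: "z $$ (0,0) * z $$ (2,2) = z $$ (0,2) * z $$ (2,0)" by (rule minor) auto
  define a y where "a = z $$ (0,0)" and "y = z $$ (0,2)"
  have "a * y = t^3 * (a * y)"
  proof -
    have "a * y = t^2 * (z $$ (1,0) * z $$ (2,1))"
      using m1 diag off unfolding a_def y_def by (simp add: algebra_simps power2_eq_square)
    also have "\<dots> = t^3 * (a * y)"
      using m2 diag off unfolding a_def y_def by (simp add: algebra_simps eval_nat_numeral)
    finally show ?thesis .
  qed
  then have ay: "a * y = 0"
    using t by (metis mult_cancel_right1 mult.commute)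
  have "a^2 = t * y^2"
    using m3 diag off unfolding a_def y_def by (simp add: algebra_simps power2_eq_square)
  then have "a^3 = t * y * (a * y)"
    by (simp add: algebra_simps eval_nat_numeral)
  then show ?thesis
    using ay unfolding a_def by simp
qed

lemma A_mat_notin_VV1:
  assumes "lam > 0" "lam \<noteq> 1"
  shows "A_mat lam \<notin> VV 1"
proof
  assume "A_mat lam \<in> VV 1"
  then obtain n and c :: "nat \<Rightarrow> real" and zs :: "nat \<Rightarrow> complex mat"
    where z: "\<forall>i<n. 0 \<le> c i \<and> zs i \<in> carrier_mat 3 3 \<and> vec_space.rank 3 (zs i) \<le> 1"
      and A: "A_mat lam = mat 9 9 (\<lambda>(r,k). \<Sum>i<n. complex_of_real (c i) * ztilde_proj (zs i) $$ (r,k))"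
    unfolding VV_def by blast
  have c: "\<forall>i<n. 0 \<le> c i" using z by blast
  have t: "complex_of_real (lam^2) ^ 3 \<noteq> 1"
  proof
    assume "complex_of_real (lam^2) ^ 3 = 1"
    then have "(lam^2)^3 = 1"
      by (metis of_real_eq_1_iff of_real_power)
    then have "lam^6 = 1^6"
      by (simp flip: power_mult)
    then have "lam = 1"
      by (rule power_eq_imp_eq_base) (use assms in auto)
    with assms show False by simp
  qed
  have z00: "zs i $$ (0,0) = 0" if i: "i < n" "c i \<noteq> 0" for i
  proof -
    have kernel: "zs i $$ (p div 3, p mod 3) = of_real t * zs i $$ (q div 3, q mod 3)"
      if "p < 9" "q < 9" and form: "A_entries lam ! p ! p - t * (A_entries lam ! p ! q + A_entries lam ! q ! p)
        + t^2 * A_entries lam ! q ! q = 0" for p q t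
    proof -
      have "A_mat lam $$ (p,p) - of_real t * (A_mat lam $$ (p,q) + A_mat lam $$ (q,p))
          + of_real (t^2) * A_mat lam $$ (q,q) = 0"
        using that(1,2) arg_cong[OF form, of complex_of_real] by (simp add: A_mat_index)
      from cone_sum_form_zero_imp_ztilde_eq[OF c A that(1,2) this i] show ?thesis
        using that(1,2) by (simp add: ztilde_def)
    qed
    have "lam \<noteq> 0" using assms by simp
    then have "zs i $$ (0,0) = zs i $$ (1,1)" "zs i $$ (1,1) = zs i $$ (2,2)"
      "zs i $$ (0,1) = of_real (lam^2) * zs i $$ (1,0)"
      "zs i $$ (2,0) = of_real (lam^2) * zs i $$ (0,2)"
      "zs i $$ (1,2) = of_real (lam^2) * zs i $$ (2,1)"
      using kernel[of 0 4 1] kernel[of 4 8 1] kernel[of 1 3 "lam^2"] kernel[of 6 2 "lam^2"]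
        kernel[of 5 7 "lam^2"]
      by (simp_all add: A_entries_def Let_def power2_eq_square field_simps numeral_2_eq_2)
    then show ?thesis
      using z i t by (intro rank_le_1_twisted_diagonal_eq_0) auto
  qed
  have "A_mat lam $$ (0,0) = (\<Sum>i<n. of_real (c i) * (zs i $$ (0,0) * cnj (zs i $$ (0,0))))"
    by (simp add: A ztilde_proj_index ztilde_def)
  also have "\<dots> = 0"
    by (rule sum.neutral) (use z00 in fastforce)
  finally have "A_mat lam $$ (0,0) = 0" .
  moreover have "A_mat lam $$ (0,0) = 1"
    by (simp add: A_mat_index A_entries_def Let_def)
  ultimately show False by simp
qed

theorem mainTheorem3:
  fixes lam :: real
  assumes "lam > 0" and "lam \<noteq> 1"
  shows "A_mat lam \<in> VV 2 \<and> A_mat lam \<notin> VV 1"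
  using A_mat_in_VV2 A_mat_notin_VV1 assms by simp

end
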